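(* Let $d\ge 1$ and let $h:\mathbb{R}^d\to\mathbb{R}$ be a continuous, integrable ($\int_{\mathbb{R}^d}|h(\tau)|\,d\tau<\infty$), positive semi-definite function such that $h(\tau)>0$ for all $\tau\in\mathbb{R}^d$. Consider the family $\mathcal{K}_h$ of all functions of the form $$k_K(\tau)=\sum_{k=1}^{K}\alpha_k\, h(\tau\odot\gamma_k)\cos(2\pi\,\omega_k^T\tau),\qquad \tau\in\mathbb{R}^d,$$ where $K\in\mathbb{N}^*=\{1,2,\dots\}$, $\alpha_k\in\mathbb{R}$, $\omega_k\in[0,\infty)^d$ and $\gamma_k\in(0,\infty)^d$. Then $\mathcal{K}_h$ is dense in the set of stationary real-valued kernels on $\mathbb{R}^d$ with respect to pointwise convergence: for every continuous positive semi-definite function $k:\mathbb{R}^d\to\mathbb{R}$ there is a sequence $(k^{(n)})_{n\ge1}$ of elements of $\mathcal{K}_h$ with $k^{(n)}(\tau)\to k(\tau)$ for every $\tau\in\mathbb{R}^d$. *)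

theory Defs
  imports "HOL-Analysis.Analysis"
begin

definition psd_fun :: "('a::real_vector \<Rightarrow> real) \<Rightarrow> bool" where
  "psd_fun k \<longleftrightarrow> (\<forall>\<tau>. k (- \<tau>) = k \<tau>) \<and>
     (\<forall>(n::nat) (x::nat \<Rightarrow> 'a) (c::nat \<Rightarrow> real).
        (\<Sum>i<n. \<Sum>j<n. c i * c j * k (x i - x j)) \<ge> 0)"

definition hadamard :: "real^'d \<Rightarrow> real^'d \<Rightarrow> real^'d" where
  "hadamard x y = (\<chi> i. x $ i * y $ i)"

definition kernel_family :: "(real^'d \<Rightarrow> real) \<Rightarrow> (real^'d \<Rightarrow> real) set" where
  "kernel_family h = {f. \<exists>(K::nat) (\<alpha>::nat \<Rightarrow> real) (\<omega>::nat \<Rightarrow> real^'d) (\<gamma>::nat \<Rightarrow> real^'d).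
      K \<ge> 1 \<and> (\<forall>k\<in>{1..K}. (\<forall>i. \<omega> k $ i \<ge> 0) \<and> (\<forall>i. \<gamma> k $ i > 0)) \<and>
      f = (\<lambda>\<tau>. \<Sum>k=1..K. \<alpha> k * h (hadamard \<tau> (\<gamma> k)) * cos (2 * pi * (\<omega> k \<bullet> \<tau>)))}"

end

theory Submission
  imports Defs
begin

text \<open>
  Only the evenness of $k$ matters. By Stone--Weierstrass, real trigonometric polynomials are
  uniformly dense on compact sets, and averaging over $\pm\tau$ shows that an even continuous
  function is, on a symmetric compact set, a uniform limit of cosine sums
  $\sum_j a_j \cos(\omega_j \cdot \tau)$. For $\omega \ge 0$ the function $\cos(\omega\cdot\tau)$ is the
  uniform limit of $h(c\tau)/h(0)\,\cos(\omega\cdot\tau) \in \mathcal{K}_h$ as $c \to 0$. A frequency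
  $p - q$ with $p, q \ge 0$ is reached from nonnegative frequencies by the binomial expansion
  $e^{-ix} = \sum_n (1 - e^{ix})^n$, which converges uniformly for $|x| \le 1/2$, after splitting
  $q$ into small steps. Approximating on the balls of radius $n$ gives pointwise convergence.
\<close>

definition uniform_closure_on :: "'a set \<Rightarrow> ('a \<Rightarrow> real) set \<Rightarrow> ('a \<Rightarrow> real) set" where
  "uniform_closure_on S F = {g. \<forall>\<epsilon>>0. \<exists>f\<in>F. \<forall>x\<in>S. \<bar>f x - g x\<bar> \<le> \<epsilon>}"

lemma uniform_closure_onE:
  assumes "g \<in> uniform_closure_on S F" "\<epsilon> > 0"
  obtains f where "f \<in> F" "\<And>x. x \<in> S \<Longrightarrow> \<bar>f x - g x\<bar> \<le> \<epsilon>"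
  using assms unfolding uniform_closure_on_def by blast

lemma uniform_closure_on_closed:
  assumes "\<And>\<epsilon>. \<epsilon> > 0 \<Longrightarrow> \<exists>f\<in>uniform_closure_on S F. \<forall>x\<in>S. \<bar>f x - g x\<bar> \<le> \<epsilon>"
  shows "g \<in> uniform_closure_on S F"
  unfolding uniform_closure_on_def
proof (intro CollectI allI impI)
  fix \<epsilon> :: real assume "\<epsilon> > 0"
  then obtain f where f: "f \<in> uniform_closure_on S F" "\<forall>x\<in>S. \<bar>f x - g x\<bar> \<le> \<epsilon>/2"
    using assms[of "\<epsilon>/2"] by auto
  obtain f' where f': "f' \<in> F" "\<And>x. x \<in> S \<Longrightarrow> \<bar>f' x - f x\<bar> \<le> \<epsilon>/2"
    using uniform_closure_onE[OF f(1), of "\<epsilon>/2"] \<open>\<epsilon> > 0\<close> by auto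
  have "\<bar>f' x - g x\<bar> \<le> \<epsilon>" if "x \<in> S" for x
    using bspec[OF f(2) that] f'(2)[OF that] by linarith
  with f'(1) show "\<exists>f\<in>F. \<forall>x\<in>S. \<bar>f x - g x\<bar> \<le> \<epsilon>"
    by (intro bexI[of _ f']) auto
qed

locale function_subspace =
  fixes F :: "('a \<Rightarrow> real) set"
  assumes zero_mem: "(\<lambda>_. 0) \<in> F"
    and add_mem: "f \<in> F \<Longrightarrow> g \<in> F \<Longrightarrow> (\<lambda>x. f x + g x) \<in> F"
    and scale_mem: "f \<in> F \<Longrightarrow> (\<lambda>x. c * f x) \<in> F"
begin

lemma uniform_closure_zero: "(\<lambda>_. 0) \<in> uniform_closure_on S F"
  using zero_mem unfolding uniform_closure_on_def by force

lemma uniform_closure_add: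
  assumes "f \<in> uniform_closure_on S F" "g \<in> uniform_closure_on S F"
  shows "(\<lambda>x. f x + g x) \<in> uniform_closure_on S F"
  unfolding uniform_closure_on_def
proof (intro CollectI allI impI)
  fix \<epsilon> :: real assume "\<epsilon> > 0"
  obtain f' where f': "f' \<in> F" "\<And>x. x \<in> S \<Longrightarrow> \<bar>f' x - f x\<bar> \<le> \<epsilon>/2"
    using uniform_closure_onE[OF assms(1), of "\<epsilon>/2"] \<open>\<epsilon> > 0\<close> by auto
  obtain g' where g': "g' \<in> F" "\<And>x. x \<in> S \<Longrightarrow> \<bar>g' x - g x\<bar> \<le> \<epsilon>/2"
    using uniform_closure_onE[OF assms(2), of "\<epsilon>/2"] \<open>\<epsilon> > 0\<close> by auto
  have "\<bar>(f' x + g' x) - (f x + g x)\<bar> \<le> \<epsilon>" if "x \<in> S" for x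
    using f'(2)[OF that] g'(2)[OF that] by linarith
  with add_mem[OF f'(1) g'(1)] show "\<exists>h\<in>F. \<forall>x\<in>S. \<bar>h x - (f x + g x)\<bar> \<le> \<epsilon>"
    by (intro bexI[of _ "\<lambda>x. f' x + g' x"]) auto
qed

lemma uniform_closure_scale:
  assumes "f \<in> uniform_closure_on S F"
  shows "(\<lambda>x. c * f x) \<in> uniform_closure_on S F"
  unfolding uniform_closure_on_def
proof (intro CollectI allI impI)
  fix \<epsilon> :: real assume "\<epsilon> > 0"
  then have "\<epsilon> / (\<bar>c\<bar> + 1) > 0" by simp
  then obtain f' where f': "f' \<in> F" "\<And>x. x \<in> S \<Longrightarrow> \<bar>f' x - f x\<bar> \<le> \<epsilon> / (\<bar>c\<bar> + 1)"
    using uniform_closure_onE[OF assms] by blast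
  have "\<bar>c * f' x - c * f x\<bar> \<le> \<epsilon>" if "x \<in> S" for x
  proof -
    have "\<bar>c * f' x - c * f x\<bar> = \<bar>c\<bar> * \<bar>f' x - f x\<bar>"
      by (simp flip: abs_mult add: right_diff_distrib)
    also have "\<dots> \<le> (\<bar>c\<bar> + 1) * (\<epsilon> / (\<bar>c\<bar> + 1))"
      using f'(2)[OF that] by (intro mult_mono) auto
    finally show ?thesis by simp
  qed
  with scale_mem[OF f'(1)] show "\<exists>h\<in>F. \<forall>x\<in>S. \<bar>h x - c * f x\<bar> \<le> \<epsilon>"
    by (intro bexI[of _ "\<lambda>x. c * f' x"]) auto
qed

lemma uniform_closure_sum:
  assumes "\<And>i. i \<in> I \<Longrightarrow> f i \<in> uniform_closure_on S F"
  shows "(\<lambda>x. \<Sum>i\<in>I. f i x) \<in> uniform_closure_on S F"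
  using assms
proof (induction I rule: infinite_finite_induct)
  case (insert i I)
  then show ?case using uniform_closure_add[of "f i" S "\<lambda>x. \<Sum>i\<in>I. f i x"] by simp
qed (simp_all add: uniform_closure_zero)

end

lemma cis_binomial_expansion:
  "(\<Sum>k\<le>n. of_real (real (n choose k) * (-1)^k) * cis (a + real k * b)) = cis a * (1 - cis b) ^ n"
proof -
  have "cis a * (1 - cis b) ^ n = cis a * (\<Sum>k\<le>n. of_nat (n choose k) * (- cis b)^k * 1^(n-k))"
    using binomial_ring[of "- cis b" 1 n] by simp
  also have "\<dots> = (\<Sum>k\<le>n. of_real (real (n choose k) * (-1)^k) * cis (a + real k * b))"
    unfolding sum_distrib_left
  proof (rule sum.cong[OF refl])
    fix k :: nat
    have "(- cis b)^k = (-1)^k * cis (real k * b)"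
      using power_minus[of "cis b" k] by (simp add: Complex.DeMoivre)
    moreover have "cis (a + real k * b) = cis a * cis (real k * b)" by (simp add: cis_mult)
    ultimately show "cis a * (of_nat (n choose k) * (- cis b)^k * 1^(n-k))
        = of_real (real (n choose k) * (-1)^k) * cis (a + real k * b)"
      by simp
  qed
  finally show ?thesis by simp
qed

lemma cos_diff_binomial_approx:
  "\<bar>(\<Sum>n<N. \<Sum>k\<le>n. real (n choose k) * (-1)^k * cos (a + real k * b)) - cos (a - b)\<bar> \<le> \<bar>b\<bar> ^ N"
proof -
  \<comment> \<open>The double sum is the real part of $e^{ia}\sum_{n<N} w^n$ with $w = 1 - e^{ib}$, a geometric
    sum equal to $e^{i(a-b)}(1 - w^N)$, and $|w| = 2|\sin(b/2)| \le |b|$.\<close>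
  define w where "w = 1 - cis b"
  have geometric: "(\<Sum>n<N. w^n) = (1 - w^N) / cis b"
    using sum_gp_strict[of w N] by (simp add: w_def)
  have "(\<Sum>n<N. \<Sum>k\<le>n. real (n choose k) * (-1)^k * cos (a + real k * b))
      = Re (\<Sum>n<N. \<Sum>k\<le>n. of_real (real (n choose k) * (-1)^k) * cis (a + real k * b))"
    by simp
  also have "\<dots> = Re (cis a * (1 - w^N) / cis b)"
    by (simp only: cis_binomial_expansion w_def[symmetric] sum_distrib_left[symmetric]
        geometric times_divide_eq_right)
  also have "cis a * (1 - w^N) / cis b = cis (a - b) - cis (a - b) * w^N"
    by (simp add: cis_divide[symmetric] right_diff_distrib diff_divide_distrib)
  finally have "(\<Sum>n<N. \<Sum>k\<le>n. real (n choose k) * (-1)^k * cos (a + real k * b)) - cos (a - b)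
      = - Re (cis (a - b) * w^N)" by simp
  then have "\<bar>(\<Sum>n<N. \<Sum>k\<le>n. real (n choose k) * (-1)^k * cos (a + real k * b)) - cos (a - b)\<bar>
      \<le> norm (cis (a - b) * w^N)"
    using abs_Re_le_cmod by (metis abs_minus_cancel)
  also have "\<dots> = norm w ^ N" by (simp add: norm_mult norm_power)
  also have "\<dots> \<le> \<bar>b\<bar> ^ N"
  proof (rule power_mono)
    have "norm w = 2 * \<bar>sin (b/2)\<bar>"
      using dist_exp_i_1[of b] by (simp add: w_def cis_conv_exp norm_minus_commute)
    then show "norm w \<le> \<bar>b\<bar>" using abs_sin_x_le_abs_x[of "b/2"] by simp
  qed simp
  finally show ?thesis .
qed

lemma cos_diff_in_uniform_closure:
  assumes "function_subspace F"
    and shifts: "\<And>k::nat. (\<lambda>x. cos (\<phi> x + real k * \<psi> x)) \<in> uniform_closure_on S F"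
    and small: "\<And>x. x \<in> S \<Longrightarrow> \<bar>\<psi> x\<bar> \<le> 1/2"
  shows "(\<lambda>x. cos (\<phi> x - \<psi> x)) \<in> uniform_closure_on S F"
proof (rule uniform_closure_on_closed)
  interpret function_subspace F by fact
  fix \<epsilon> :: real assume "\<epsilon> > 0"
  obtain N where N: "(1/2::real) ^ N < \<epsilon>"
    using real_arch_pow_inv[OF \<open>\<epsilon> > 0\<close>, of "1/2"] by auto
  define g where "g x = (\<Sum>n<N. \<Sum>k\<le>n. real (n choose k) * (-1)^k * cos (\<phi> x + real k * \<psi> x))" for x
  have "g \<in> uniform_closure_on S F"
    unfolding g_def by (intro uniform_closure_sum uniform_closure_scale shifts)
  moreover have "\<bar>g x - cos (\<phi> x - \<psi> x)\<bar> \<le> \<epsilon>" if "x \<in> S" for x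
  proof -
    have "\<bar>g x - cos (\<phi> x - \<psi> x)\<bar> \<le> \<bar>\<psi> x\<bar> ^ N"
      unfolding g_def by (rule cos_diff_binomial_approx)
    also have "\<dots> \<le> (1/2) ^ N"
      using small[OF that] by (intro power_mono) auto
    finally show ?thesis using N by linarith
  qed
  ultimately show "\<exists>g\<in>uniform_closure_on S F. \<forall>x\<in>S. \<bar>g x - cos (\<phi> x - \<psi> x)\<bar> \<le> \<epsilon>"
    by (intro bexI[of _ g]) auto
qed

lemma cos_cone_difference_in_uniform_closure:
  fixes S :: "'a::real_inner set"
  assumes "function_subspace F" "convex_cone C" "bounded S"
    and cone: "\<And>u. u \<in> C \<Longrightarrow> (\<lambda>x. cos (u \<bullet> x)) \<in> uniform_closure_on S F"
    and "u \<in> C" "v \<in> C"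
  shows "(\<lambda>x. cos ((u - v) \<bullet> x)) \<in> uniform_closure_on S F"
proof -
  obtain B where B: "B > 0" "\<And>x. x \<in> S \<Longrightarrow> norm x \<le> B"
    using bounded_pos \<open>bounded S\<close> by blast
  obtain M :: nat where M: "2 * B * norm v < real M"
    using reals_Archimedean2 by blast
  moreover have "0 \<le> 2 * B * norm v" using B(1) by simp
  ultimately have "real M > 0" by linarith
  \<comment> \<open>Subtract $v$ in $M$ steps $r = v/M$, each small enough on $S$ for the binomial expansion.\<close>
  define r where "r = inverse (real M) *\<^sub>R v"
  have "r \<in> C" unfolding r_def using assms(2,6) by (simp add: convex_cone_scaleR)
  have small: "\<bar>r \<bullet> x\<bar> \<le> 1/2" if "x \<in> S" for x
  proof -
    have "\<bar>r \<bullet> x\<bar> \<le> norm r * norm x" by (rule Cauchy_Schwarz_ineq2)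
    also have "\<dots> \<le> norm v / real M * B"
      using B(2)[OF that] \<open>real M > 0\<close> by (intro mult_mono) (auto simp: r_def divide_inverse mult.commute)
    also have "\<dots> \<le> 1/2"
      using M \<open>real M > 0\<close> by (simp add: field_simps)
    finally show ?thesis .
  qed
  have "\<forall>u\<in>C. (\<lambda>x. cos ((u - real j *\<^sub>R r) \<bullet> x)) \<in> uniform_closure_on S F" for j
  proof (induction j)
    case 0
    then show ?case using cone by simp
  next
    case (Suc j)
    show ?case
    proof
      fix u assume "u \<in> C"
      have "(\<lambda>x. cos ((u - real j *\<^sub>R r) \<bullet> x - r \<bullet> x)) \<in> uniform_closure_on S F"
      proof (rule cos_diff_in_uniform_closure[OF assms(1) _ small])
        fix k :: nat
        have "u + real k *\<^sub>R r \<in> C"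
          using assms(2) \<open>u \<in> C\<close> \<open>r \<in> C\<close> by (simp add: convex_cone_add convex_cone_scaleR)
        then have "(\<lambda>x. cos ((u + real k *\<^sub>R r - real j *\<^sub>R r) \<bullet> x)) \<in> uniform_closure_on S F"
          using Suc.IH by blast
        then show "(\<lambda>x. cos ((u - real j *\<^sub>R r) \<bullet> x + real k * (r \<bullet> x))) \<in> uniform_closure_on S F"
          by (simp add: inner_diff_left inner_add_left algebra_simps)
      qed
      then show "(\<lambda>x. cos ((u - real (Suc j) *\<^sub>R r) \<bullet> x)) \<in> uniform_closure_on S F"
        by (simp add: inner_diff_left inner_add_left algebra_simps)
    qed
  qed
  moreover have "real M *\<^sub>R r = v"
    using \<open>real M > 0\<close> by (simp add: r_def)
  ultimately show ?thesis
    using \<open>u \<in> C\<close> by metis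
qed

inductive_set trig_polynomials :: "('a::real_inner \<Rightarrow> complex) set" where
  trig_polynomials_cis: "(\<lambda>x. c * cis (\<omega> \<bullet> x)) \<in> trig_polynomials"
| trig_polynomials_add: "f \<in> trig_polynomials \<Longrightarrow> g \<in> trig_polynomials \<Longrightarrow> (\<lambda>x. f x + g x) \<in> trig_polynomials"

lemma trig_polynomials_scale:
  "f \<in> trig_polynomials \<Longrightarrow> (\<lambda>x. c * f x) \<in> trig_polynomials"
proof (induction rule: trig_polynomials.induct)
  case (trig_polynomials_cis d \<omega>)
  then show ?case using trig_polynomials.trig_polynomials_cis[of "c * d" \<omega>] by (simp add: mult.assoc)
next
  case (trig_polynomials_add f g)
  then show ?case using trig_polynomials.trig_polynomials_add by (simp add: distrib_left)
qed

lemma trig_polynomials_cis_mult: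
  "g \<in> trig_polynomials \<Longrightarrow> (\<lambda>x. c * cis (\<omega> \<bullet> x) * g x) \<in> trig_polynomials"
proof (induction rule: trig_polynomials.induct)
  case (trig_polynomials_cis d \<mu>)
  have "(\<lambda>x. (c * d) * cis ((\<omega> + \<mu>) \<bullet> x)) \<in> trig_polynomials"
    by (rule trig_polynomials.trig_polynomials_cis)
  then show ?case by (simp add: inner_add_left cis_mult[symmetric] mult_ac)
next
  case (trig_polynomials_add f g)
  then show ?case using trig_polynomials.trig_polynomials_add by (simp add: distrib_left)
qed

lemma trig_polynomials_mult:
  "f \<in> trig_polynomials \<Longrightarrow> g \<in> trig_polynomials \<Longrightarrow> (\<lambda>x. f x * g x) \<in> trig_polynomials"
proof (induction rule: trig_polynomials.induct)
  case (trig_polynomials_cis c \<omega>)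
  then show ?case by (rule trig_polynomials_cis_mult)
next
  case (trig_polynomials_add f1 f2)
  then show ?case using trig_polynomials.trig_polynomials_add by (simp add: distrib_right)
qed

lemma trig_polynomials_cnj:
  "f \<in> trig_polynomials \<Longrightarrow> (\<lambda>x. cnj (f x)) \<in> trig_polynomials"
proof (induction rule: trig_polynomials.induct)
  case (trig_polynomials_cis c \<omega>)
  have "(\<lambda>x. cnj c * cis ((- \<omega>) \<bullet> x)) \<in> trig_polynomials"
    by (rule trig_polynomials.trig_polynomials_cis)
  then show ?case by (simp add: cis_cnj)
next
  case (trig_polynomials_add f g)
  then show ?case using trig_polynomials.trig_polynomials_add by simp
qed

lemma continuous_on_trig_polynomial:
  "f \<in> trig_polynomials \<Longrightarrow> continuous_on S f"
  by (induction rule: trig_polynomials.induct) (auto simp: cis_conv_exp intro!: continuous_intros)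

lemma cis_inner_separates_points:
  fixes x y :: "'a::real_inner"
  assumes "x \<noteq> y"
  obtains \<omega> where "cis (\<omega> \<bullet> x) \<noteq> cis (\<omega> \<bullet> y)"
proof
  define \<omega> where "\<omega> = (pi / (norm (x - y))\<^sup>2) *\<^sub>R (x - y)"
  have "\<omega> \<bullet> x - \<omega> \<bullet> y = \<omega> \<bullet> (x - y)"
    by (simp add: inner_diff_right)
  also have "\<dots> = pi"
    using assms by (simp add: \<omega>_def power2_norm_eq_inner)
  finally have "\<omega> \<bullet> x = \<omega> \<bullet> y + pi"
    by simp
  then have "cis (\<omega> \<bullet> x) = - cis (\<omega> \<bullet> y)"
    by (simp flip: cis_mult)
  then show "cis (\<omega> \<bullet> x) \<noteq> cis (\<omega> \<bullet> y)"
    using cis_neq_zero[of "\<omega> \<bullet> y"] by (auto simp: minus_equation_iff)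
qed

definition real_trig_polynomials :: "('a::real_inner \<Rightarrow> real) set" where
  "real_trig_polynomials = (\<lambda>f x. Re (f x)) ` trig_polynomials"

lemma Re_in_real_trig_polynomials:
  "f \<in> trig_polynomials \<Longrightarrow> (\<lambda>x. Re (f x)) \<in> real_trig_polynomials"
  unfolding real_trig_polynomials_def by (rule imageI)

lemma real_trig_polynomialsE:
  assumes "u \<in> real_trig_polynomials"
  obtains f where "f \<in> trig_polynomials" "u = (\<lambda>x. Re (f x))"
  using assms unfolding real_trig_polynomials_def by blast

lemma function_ring_on_real_trig_polynomials:
  fixes S :: "'a::real_inner set"
  assumes "compact S"
  shows "function_ring_on real_trig_polynomials S"
proof
  show "compact S" by fact
next
  fix u :: "'a \<Rightarrow> real" assume "u \<in> real_trig_polynomials"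
  then obtain f where "f \<in> trig_polynomials" "u = (\<lambda>x. Re (f x))"
    by (rule real_trig_polynomialsE)
  then show "continuous_on S u"
    by (simp add: continuous_on_Re continuous_on_trig_polynomial)
next
  fix u v :: "'a \<Rightarrow> real" assume "u \<in> real_trig_polynomials" "v \<in> real_trig_polynomials"
  then obtain f g where fg: "f \<in> trig_polynomials" "g \<in> trig_polynomials"
    and uv: "u = (\<lambda>x. Re (f x))" "v = (\<lambda>x. Re (g x))"
    by (metis real_trig_polynomialsE)
  show "(\<lambda>x. u x + v x) \<in> real_trig_polynomials"
    using Re_in_real_trig_polynomials[OF trig_polynomials_add[OF fg]] by (simp add: uv)
  have "(\<lambda>x. f x * ((1/2) * (g x + cnj (g x)))) \<in> trig_polynomials"
    using fg by (intro trig_polynomials_mult trig_polynomials_scale trig_polynomials_add trig_polynomials_cnj)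
  then have "(\<lambda>x. Re (f x * ((1/2) * (g x + cnj (g x))))) \<in> real_trig_polynomials"
    by (rule Re_in_real_trig_polynomials)
  moreover have "(\<lambda>x. Re (f x * ((1/2) * (g x + cnj (g x))))) = (\<lambda>x. u x * v x)"
    by (simp add: uv complex_add_cnj)
  ultimately show "(\<lambda>x. u x * v x) \<in> real_trig_polynomials"
    by simp
next
  fix c :: real
  have "(\<lambda>x. complex_of_real c * cis (0 \<bullet> x)) \<in> trig_polynomials"
    by (rule trig_polynomials_cis)
  then have "(\<lambda>x. Re (complex_of_real c * cis (0 \<bullet> x))) \<in> real_trig_polynomials"
    by (rule Re_in_real_trig_polynomials)
  then show "(\<lambda>_. c) \<in> real_trig_polynomials"
    by simp
next
  fix x y :: 'a assume "x \<noteq> y"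
  then obtain \<omega> where \<omega>: "cis (\<omega> \<bullet> x) \<noteq> cis (\<omega> \<bullet> y)"
    by (rule cis_inner_separates_points)
  have re: "(\<lambda>x. Re (1 * cis (\<omega> \<bullet> x))) \<in> real_trig_polynomials"
    and im: "(\<lambda>x. Re (- \<i> * cis (\<omega> \<bullet> x))) \<in> real_trig_polynomials"
    by (intro Re_in_real_trig_polynomials trig_polynomials_cis)+
  consider "Re (cis (\<omega> \<bullet> x)) \<noteq> Re (cis (\<omega> \<bullet> y))" | "Im (cis (\<omega> \<bullet> x)) \<noteq> Im (cis (\<omega> \<bullet> y))"
    using \<omega> complex_eqI by meson
  then show "\<exists>u\<in>real_trig_polynomials. u x \<noteq> u y"
  proof cases
    case 1 with re show ?thesis by (intro bexI[of _ "\<lambda>x. Re (1 * cis (\<omega> \<bullet> x))"]) auto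
  next
    case 2 with im show ?thesis by (intro bexI[of _ "\<lambda>x. Re (- \<i> * cis (\<omega> \<bullet> x))"]) auto
  qed
qed

lemma even_part_of_trig_polynomial_in_uniform_closure:
  fixes S :: "'a::real_inner set"
  assumes "function_subspace F"
    and cos: "\<And>\<omega>. (\<lambda>x. cos (\<omega> \<bullet> x)) \<in> uniform_closure_on S F"
    and "f \<in> trig_polynomials"
  shows "(\<lambda>x. Re (f x) + Re (f (- x))) \<in> uniform_closure_on S F"
proof -
  interpret function_subspace F by fact
  show ?thesis
    using \<open>f \<in> trig_polynomials\<close>
  proof (induction rule: trig_polynomials.induct)
    case (trig_polynomials_cis c \<omega>)
    have "(\<lambda>x. (2 * Re c) * cos (\<omega> \<bullet> x)) \<in> uniform_closure_on S F"
      by (intro uniform_closure_scale cos)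
    then show ?case by (simp add: cis.code mult.assoc)
  next
    case (trig_polynomials_add f g)
    have "(\<lambda>x. (Re (f x) + Re (f (- x))) + (Re (g x) + Re (g (- x)))) \<in> uniform_closure_on S F"
      using trig_polynomials_add.IH by (rule uniform_closure_add)
    then show ?case by (simp add: algebra_simps)
  qed
qed

lemma even_continuous_in_uniform_closure:
  fixes S :: "'a::real_inner set"
  assumes "function_subspace F"
    and cos: "\<And>\<omega>. (\<lambda>x. cos (\<omega> \<bullet> x)) \<in> uniform_closure_on S F"
    and "compact S" and symmetric: "\<And>x. x \<in> S \<Longrightarrow> - x \<in> S"
    and "continuous_on S k" and even: "\<And>x. x \<in> S \<Longrightarrow> k (- x) = k x"
  shows "k \<in> uniform_closure_on S F"
proof (rule uniform_closure_on_closed)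
  interpret function_subspace F by fact
  interpret trig: function_ring_on real_trig_polynomials S
    using \<open>compact S\<close> by (rule function_ring_on_real_trig_polynomials)
  fix \<epsilon> :: real assume "\<epsilon> > 0"
  then obtain u where "u \<in> real_trig_polynomials" and u: "\<forall>x\<in>S. \<bar>k x - u x\<bar> < \<epsilon>"
    using trig.Stone_Weierstrass_basic[OF \<open>continuous_on S k\<close>] by blast
  from this(1) obtain f where f: "f \<in> trig_polynomials" "u = (\<lambda>x. Re (f x))"
    by (rule real_trig_polynomialsE)
  define g where "g x = (1/2) * (Re (f x) + Re (f (- x)))" for x
  have "g \<in> uniform_closure_on S F"
    unfolding g_def using assms(1) cos f(1)
    by (intro uniform_closure_scale even_part_of_trig_polynomial_in_uniform_closure)
  \<comment> \<open>Averaging over $\pm x$ keeps the error bound because $k$ is even.\<close>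
  moreover have "\<bar>g x - k x\<bar> \<le> \<epsilon>" if "x \<in> S" for x
  proof -
    have "\<bar>k x - Re (f x)\<bar> < \<epsilon>" "\<bar>k (- x) - Re (f (- x))\<bar> < \<epsilon>"
      using u f(2) that symmetric[OF that] by auto
    then show ?thesis
      unfolding g_def even[OF that] by (simp add: abs_less_iff abs_le_iff field_simps)
  qed
  ultimately show "\<exists>g\<in>uniform_closure_on S F. \<forall>x\<in>S. \<bar>g x - k x\<bar> \<le> \<epsilon>"
    by (intro bexI[of _ g]) auto
qed

lemma pointwise_limit_from_uniform_closure_on_cballs:
  fixes g :: "'a::real_normed_vector \<Rightarrow> real"
  assumes "\<And>n::nat. g \<in> uniform_closure_on (cball 0 (real n)) F"
  shows "\<exists>s. (\<forall>n. s n \<in> F) \<and> (\<forall>x. (\<lambda>n. s n x) \<longlonglongrightarrow> g x)"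
proof -
  have "\<forall>n. \<exists>f\<in>F. \<forall>x\<in>cball 0 (real n). \<bar>f x - g x\<bar> \<le> inverse (real (Suc n))"
    using assms unfolding uniform_closure_on_def by simp
  then obtain s where s: "\<And>n. s n \<in> F"
    and close: "\<And>n x. x \<in> cball 0 (real n) \<Longrightarrow> \<bar>s n x - g x\<bar> \<le> inverse (real (Suc n))"
    by metis
  have "(\<lambda>n. s n x) \<longlonglongrightarrow> g x" for x
  proof (rule LIM_zero_cancel, rule Lim_null_comparison[OF _ LIMSEQ_inverse_real_of_nat])
    have "norm (s n x - g x) \<le> inverse (real (Suc n))" if "n \<ge> nat \<lceil>norm x\<rceil>" for n
      using close[of x n] that real_nat_ceiling_ge[of "norm x"] by simp
    then show "\<forall>\<^sub>F n in sequentially. norm (s n x - g x) \<le> inverse (real (Suc n))"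
      by (rule eventually_sequentiallyI)
  qed
  with s show ?thesis by blast
qed

lemma hadamard_const_right: "hadamard \<tau> (\<chi> i. c) = c *\<^sub>R \<tau>"
  by (simp add: hadamard_def vec_eq_iff mult.commute)

lemma kernel_familyE:
  assumes "f \<in> kernel_family h"
  obtains K :: nat and \<alpha> \<omega> \<gamma> where "K \<ge> 1" "\<forall>k\<in>{1..K}. (\<forall>i. \<omega> k $ i \<ge> 0) \<and> (\<forall>i. \<gamma> k $ i > 0)"
    "f = (\<lambda>\<tau>. \<Sum>k=1..K. \<alpha> k * h (hadamard \<tau> (\<gamma> k)) * cos (2 * pi * (\<omega> k \<bullet> \<tau>)))"
  using assms unfolding kernel_family_def by blast

lemma kernel_familyI:
  fixes K :: nat
  assumes "K \<ge> 1" "\<forall>k\<in>{1..K}. (\<forall>i. \<omega> k $ i \<ge> 0) \<and> (\<forall>i. \<gamma> k $ i > 0)"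
  shows "(\<lambda>\<tau>. \<Sum>k=1..K. \<alpha> k * h (hadamard \<tau> (\<gamma> k)) * cos (2 * pi * (\<omega> k \<bullet> \<tau>))) \<in> kernel_family h"
  using assms unfolding kernel_family_def by auto

lemma kernel_family_add:
  assumes "f \<in> kernel_family h" "g \<in> kernel_family h"
  shows "(\<lambda>\<tau>. f \<tau> + g \<tau>) \<in> kernel_family h"
proof -
  from assms obtain K L :: nat and \<alpha> \<omega> \<gamma> \<alpha>' \<omega>' \<gamma>'
    where K: "K \<ge> 1" "\<forall>k\<in>{1..K}. (\<forall>i. \<omega> k $ i \<ge> 0) \<and> (\<forall>i. \<gamma> k $ i > 0)"
      and f: "f = (\<lambda>\<tau>. \<Sum>k=1..K. \<alpha> k * h (hadamard \<tau> (\<gamma> k)) * cos (2 * pi * (\<omega> k \<bullet> \<tau>)))"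
      and L: "L \<ge> 1" "\<forall>k\<in>{1..L}. (\<forall>i. \<omega>' k $ i \<ge> 0) \<and> (\<forall>i. \<gamma>' k $ i > 0)"
      and g: "g = (\<lambda>\<tau>. \<Sum>k=1..L. \<alpha>' k * h (hadamard \<tau> (\<gamma>' k)) * cos (2 * pi * (\<omega>' k \<bullet> \<tau>)))"
    by (elim kernel_familyE)
  define A where "A k = (if k \<le> K then \<alpha> k else \<alpha>' (k - K))" for k
  define W where "W k = (if k \<le> K then \<omega> k else \<omega>' (k - K))" for k
  define G where "G k = (if k \<le> K then \<gamma> k else \<gamma>' (k - K))" for k
  define t where "t \<tau> k = A k * h (hadamard \<tau> (G k)) * cos (2 * pi * (W k \<bullet> \<tau>))" for \<tau> k
  have "(\<Sum>k=1..K+L. t \<tau> k) = (\<Sum>k=1..K. t \<tau> k) + (\<Sum>k=1..L. t \<tau> (k + K))" for \<tau>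
    using sum.ub_add_nat[of 1 K "t \<tau>" L] sum.shift_bounds_cl_nat_ivl[of "t \<tau>" 1 K L]
    by (simp add: add.commute)
  also have "\<dots> \<tau> = f \<tau> + g \<tau>" for \<tau>
    unfolding f g t_def A_def W_def G_def by (intro arg_cong2[where f="(+)"] sum.cong) auto
  finally have "(\<lambda>\<tau>. f \<tau> + g \<tau>) = (\<lambda>\<tau>. \<Sum>k=1..K+L. t \<tau> k)"
    by simp
  moreover have "\<forall>k\<in>{1..K+L}. (\<forall>i. W k $ i \<ge> 0) \<and> (\<forall>i. G k $ i > 0)"
  proof
    fix k assume k: "k \<in> {1..K+L}"
    show "(\<forall>i. W k $ i \<ge> 0) \<and> (\<forall>i. G k $ i > 0)"
    proof (cases "k \<le> K")
      case True
      with k K(2) show ?thesis by (simp add: W_def G_def)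
    next
      case False
      with k have "k - K \<in> {1..L}" by auto
      with False L(2) show ?thesis by (simp add: W_def G_def)
    qed
  qed
  ultimately show ?thesis
    using kernel_familyI[of "K + L" W G A h] K(1) by (simp add: t_def)
qed

lemma function_subspace_kernel_family: "function_subspace (kernel_family h)"
proof
  show "(\<lambda>_. 0) \<in> kernel_family h"
    using kernel_familyI[where K=1 and \<alpha>="\<lambda>_. 0" and \<omega>="\<lambda>_. 0" and \<gamma>="\<lambda>_. \<chi> i. 1" and h=h]
    by simp
next
  fix f c assume "f \<in> kernel_family h"
  then obtain K :: nat and \<alpha> \<omega> \<gamma> where K: "K \<ge> 1" "\<forall>k\<in>{1..K}. (\<forall>i. \<omega> k $ i \<ge> 0) \<and> (\<forall>i. \<gamma> k $ i > 0)"
    and f: "f = (\<lambda>\<tau>. \<Sum>k=1..K. \<alpha> k * h (hadamard \<tau> (\<gamma> k)) * cos (2 * pi * (\<omega> k \<bullet> \<tau>)))"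
    by (rule kernel_familyE)
  show "(\<lambda>\<tau>. c * f \<tau>) \<in> kernel_family h"
    using kernel_familyI[OF K, of "\<lambda>k. c * \<alpha> k" h] by (simp add: f sum_distrib_left mult.assoc)
next
  fix f g assume "f \<in> kernel_family h" "g \<in> kernel_family h"
  then show "(\<lambda>\<tau>. f \<tau> + g \<tau>) \<in> kernel_family h"
    by (rule kernel_family_add)
qed

lemma cos_in_uniform_closure_kernel_family:
  fixes h :: "real^'d \<Rightarrow> real"
  assumes "isCont h 0" "h 0 > 0" "\<forall>i. \<omega> $ i \<ge> 0" "bounded S"
  shows "(\<lambda>\<tau>. cos (\<omega> \<bullet> \<tau>)) \<in> uniform_closure_on S (kernel_family h)"
  unfolding uniform_closure_on_def
proof (intro CollectI allI impI)
  fix \<epsilon> :: real assume "\<epsilon> > 0"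
  obtain B where B: "B > 0" "\<And>\<tau>. \<tau> \<in> S \<Longrightarrow> norm \<tau> \<le> B"
    using bounded_pos \<open>bounded S\<close> by blast
  have "\<epsilon> * h 0 > 0" using \<open>\<epsilon> > 0\<close> \<open>h 0 > 0\<close> by simp
  then obtain \<delta> where \<delta>: "\<delta> > 0" "\<And>\<tau>. dist \<tau> 0 < \<delta> \<Longrightarrow> dist (h \<tau>) (h 0) < \<epsilon> * h 0"
    using \<open>isCont h 0\<close> unfolding continuous_at_eps_delta by blast
  define c where "c = \<delta> / (2 * B)"
  have "c > 0" using \<delta>(1) B(1) by (simp add: c_def)
  \<comment> \<open>Shrinking the argument of $h$ by $c$ makes $h(c\tau)/h(0)$ uniformly close to $1$ on $S$.\<close>
  have "(\<lambda>\<tau>. h (c *\<^sub>R \<tau>) / h 0 * cos (\<omega> \<bullet> \<tau>)) \<in> kernel_family h"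
    using kernel_familyI[where K=1 and \<alpha>="\<lambda>_. 1 / h 0" and \<omega>="\<lambda>_. (1 / (2 * pi)) *\<^sub>R \<omega>"
        and \<gamma>="\<lambda>_. \<chi> i. c" and h=h] \<open>c > 0\<close> assms(3)
    by (simp add: hadamard_const_right)
  moreover have "\<bar>h (c *\<^sub>R \<tau>) / h 0 * cos (\<omega> \<bullet> \<tau>) - cos (\<omega> \<bullet> \<tau>)\<bar> \<le> \<epsilon>" if "\<tau> \<in> S" for \<tau>
  proof -
    have "norm (c *\<^sub>R \<tau>) \<le> c * B"
      using B(2)[OF that] \<open>c > 0\<close> by (simp add: mult_left_mono)
    also have "\<dots> < \<delta>"
      using \<delta>(1) B(1) by (simp add: c_def)
    finally have "\<bar>h (c *\<^sub>R \<tau>) - h 0\<bar> < \<epsilon> * h 0"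
      using \<delta>(2)[of "c *\<^sub>R \<tau>"] by (simp add: dist_real_def)
    then have "\<bar>h (c *\<^sub>R \<tau>) / h 0 - 1\<bar> \<le> \<epsilon>"
      using \<open>h 0 > 0\<close> by (simp add: abs_le_iff abs_less_iff field_simps)
    then have "\<bar>h (c *\<^sub>R \<tau>) / h 0 - 1\<bar> * \<bar>cos (\<omega> \<bullet> \<tau>)\<bar> \<le> \<epsilon> * 1"
      by (intro mult_mono) auto
    moreover have "h (c *\<^sub>R \<tau>) / h 0 * cos (\<omega> \<bullet> \<tau>) - cos (\<omega> \<bullet> \<tau>) = (h (c *\<^sub>R \<tau>) / h 0 - 1) * cos (\<omega> \<bullet> \<tau>)"
      by (simp add: left_diff_distrib)
    ultimately show ?thesis
      by (simp only: abs_mult mult_1_right)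
  qed
  ultimately show "\<exists>f\<in>kernel_family h. \<forall>\<tau>\<in>S. \<bar>f \<tau> - cos (\<omega> \<bullet> \<tau>)\<bar> \<le> \<epsilon>"
    by (intro bexI[of _ "\<lambda>\<tau>. h (c *\<^sub>R \<tau>) / h 0 * cos (\<omega> \<bullet> \<tau>)"]) auto
qed

lemma convex_cone_nonneg_orthant: "convex_cone {u :: real^'n. \<forall>i. 0 \<le> u $ i}"
  by (auto simp: convex_cone_iff)

lemma even_continuous_in_uniform_closure_kernel_family:
  fixes h k :: "real^'d \<Rightarrow> real"
  assumes "isCont h 0" "h 0 > 0"
    and "compact S" "\<And>\<tau>. \<tau> \<in> S \<Longrightarrow> - \<tau> \<in> S"
    and "continuous_on S k" "\<And>\<tau>. \<tau> \<in> S \<Longrightarrow> k (- \<tau>) = k \<tau>"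
  shows "k \<in> uniform_closure_on S (kernel_family h)"
proof (rule even_continuous_in_uniform_closure[OF function_subspace_kernel_family _ assms(3-6)])
  fix \<omega> :: "real^'d"
  define p where "p = (\<chi> i. max (\<omega> $ i) 0)"
  define q where "q = (\<chi> i. max (- \<omega> $ i) 0)"
  have "\<omega> = p - q"
    by (simp add: p_def q_def vec_eq_iff) linarith
  moreover have "(\<lambda>\<tau>. cos ((p - q) \<bullet> \<tau>)) \<in> uniform_closure_on S (kernel_family h)"
    using assms(1,2) \<open>compact S\<close>
    by (intro cos_cone_difference_in_uniform_closure[OF function_subspace_kernel_family
          convex_cone_nonneg_orthant] cos_in_uniform_closure_kernel_family compact_imp_bounded)
      (auto simp: p_def q_def)
  ultimately show "(\<lambda>\<tau>. cos (\<omega> \<bullet> \<tau>)) \<in> uniform_closure_on S (kernel_family h)"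
    by simp
qed

theorem theorem3:
  fixes h :: "real^'d \<Rightarrow> real"
  assumes "continuous_on UNIV h"
    and "integrable lborel h"
    and "psd_fun h"
    and "\<And>\<tau>. h \<tau> > 0"
  shows "\<forall>k :: real^'d \<Rightarrow> real. continuous_on UNIV k \<and> psd_fun k \<longrightarrow>
           (\<exists>s :: nat \<Rightarrow> real^'d \<Rightarrow> real. (\<forall>n. s n \<in> kernel_family h) \<and>
              (\<forall>\<tau>. (\<lambda>n. s n \<tau>) \<longlonglongrightarrow> k \<tau>))"
proof (intro allI impI)
  fix k :: "real^'d \<Rightarrow> real"
  assume k: "continuous_on UNIV k \<and> psd_fun k"
  have "isCont h 0"
    using assms(1) by (simp add: continuous_on_eq_continuous_at)
  moreover have "k (- \<tau>) = k \<tau>" for \<tau>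
    using k unfolding psd_fun_def by blast
  ultimately have "k \<in> uniform_closure_on (cball 0 (real n)) (kernel_family h)" for n
    using k assms(4) by (intro even_continuous_in_uniform_closure_kernel_family)
      (auto intro: continuous_on_subset)
  then show "\<exists>s. (\<forall>n. s n \<in> kernel_family h) \<and> (\<forall>\<tau>. (\<lambda>n. s n \<tau>) \<longlonglongrightarrow> k \<tau>)"
    by (rule pointwise_limit_from_uniform_closure_on_cballs)
qed

end
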